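(* Let $N$ be a finite set with $|N|\ge 2$ and let $\mathcal{D}\subseteq\mathrm{DAG}(N)$ be a facet of $P_N$ which does not contain the empty graph. Then $\mathcal{D}$ is closed under super-graphs: if $G\in\mathcal{D}$ is a subgraph of $H\in\mathrm{DAG}(N)$, then $H\in\mathcal{D}$. Moreover, for every $(a|B)\in\Upsilon$ there exists $G\in\mathcal{D}$ with $\mathrm{pa}_G(a)=B$.
   Context: $\mathrm{DAG}(N)$ is the set of acyclic directed graphs over $N$; $\mathrm{pa}_G(a)$ is the parent set of $a$ in $G$; the empty graph has no arrows. $\Upsilon=\{(a|B): a\in N,\ \emptyset\neq B\subseteq N\setminus\{a\}\}$; $\eta_G\in\mathbb{R}^{\Upsilon}$ has $\eta_G(a|B)=1$ if $B=\mathrm{pa}_G(a)$, else $0$; $P_N=\mathrm{conv}\{\eta_G:G\in\mathrm{DAG}(N)\}$. A set $\mathcal{D}\subseteq\mathrm{DAG}(N)$ is called a facet of $P_N$ if $\mathrm{conv}\{\eta_G:G\in\mathcal{D}\}$ is a facet of $P_N$. *)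

theory Defs
  imports "HOL-Analysis.Analysis"
begin

text \<open>The ground set N is the universe of a finite type 'n.
  A directed graph over N is its set of arrows (b,a) meaning b -> a.\<close>

definition DAG :: "('n::finite \<times> 'n) set set" where
  "DAG = {E. acyclic E}"

definition pa :: "('n \<times> 'n) set \<Rightarrow> 'n \<Rightarrow> 'n set" where
  "pa G a = {b. (b, a) \<in> G}"

definition Upsilon :: "('n \<times> 'n set) set" where
  "Upsilon = {(a, B). B \<noteq> {} \<and> a \<notin> B}"

text \<open>eta G lives in real^('n \<times> 'n set); coordinates outside Upsilon are always 0,
  so this is an affine-isomorphic copy of R^Upsilon.\<close>

definition eta :: "('n::finite \<times> 'n) set \<Rightarrow> real ^ ('n \<times> 'n set)" where
  "eta G = (\<chi> i. if i \<in> Upsilon \<and> snd i = pa G (fst i) then 1 else 0)"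

definition P_N :: "(real ^ ('n::finite \<times> 'n set)) set" where
  "P_N = convex hull (eta ` DAG)"

definition is_facet :: "'a::euclidean_space set \<Rightarrow> 'a set \<Rightarrow> bool" where
  "is_facet F P \<longleftrightarrow> F face_of P \<and> aff_dim F = aff_dim P - 1"

end

theory Submission
  imports Defs
begin

text \<open>A linear functional a evaluated at eta G splits into a sum of local scores, one
  per node, each depending only on the parent set of that node. If the facet is cut out
  by a \<bullet> x = b, all graphs of D maximise this score over DAG(N). The facet cannot avoid
  any coordinate (a|B): otherwise it would lie in the proper face x(a|B) = 0, which by
  maximality it would equal, and that face contains the empty graph. Hence every parent
  set C of a node is realised by some G \<in> D, and shrinking it to B \<subseteq> C in G keeps a DAG,
  so the local score is monotone in the parent set. Summing over the nodes, every
  supergraph H of G \<in> D also maximises the score, so eta H lies on the facet; as a 0/1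
  point of the unit cube it is a vertex of the facet, whence H \<in> D.\<close>

definition local_score :: "real ^ ('n::finite \<times> 'n set) \<Rightarrow> 'n \<Rightarrow> 'n set \<Rightarrow> real" where
  "local_score a v B = (if (v, B) \<in> Upsilon then a $ (v, B) else 0)"

lemma inner_eta_eq_sum_local_score:
  "a \<bullet> eta G = (\<Sum>w\<in>UNIV. local_score a w (pa G w))"
proof -
  let ?f = "\<lambda>i. if i \<in> Upsilon \<and> snd i = pa G (fst i) then a $ i else 0"
  have "a \<bullet> eta G = (\<Sum>i\<in>UNIV \<times> UNIV. ?f i)"
    unfolding inner_vec_def eta_def by (intro sum.cong) auto
  also have "\<dots> = (\<Sum>w\<in>UNIV. \<Sum>S\<in>UNIV. ?f (w, S))"
    by (simp only: sum.cartesian_product case_prod_unfold prod.collapse)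
  also have "\<dots> = (\<Sum>w\<in>UNIV. \<Sum>S\<in>UNIV. if S = pa G w then local_score a w S else 0)"
    by (intro sum.cong) (auto simp: local_score_def)
  finally show ?thesis
    by simp
qed

definition set_parents :: "('n \<times> 'n) set \<Rightarrow> 'n \<Rightarrow> 'n set \<Rightarrow> ('n \<times> 'n) set" where
  "set_parents G v B = {e \<in> G. snd e \<noteq> v} \<union> (\<lambda>x. (x, v)) ` B"

lemma pa_set_parents: "pa (set_parents G v B) w = (if w = v then B else pa G w)"
  by (auto simp: set_parents_def pa_def)

lemma set_parents_subset: "B \<subseteq> pa G v \<Longrightarrow> set_parents G v B \<subseteq> G"
  by (auto simp: set_parents_def pa_def)

lemma inner_eta_set_parents:
  "a \<bullet> eta (set_parents G v B) = a \<bullet> eta G - local_score a v (pa G v) + local_score a v B"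
proof -
  have "a \<bullet> eta K = local_score a v (pa K v) + (\<Sum>w\<in>UNIV - {v}. local_score a w (pa K w))"
    for K
    by (simp add: inner_eta_eq_sum_local_score sum.remove[of UNIV v])
  from this[of "set_parents G v B"] this[of G] show ?thesis
    by (simp add: pa_set_parents)
qed

lemma not_mem_pa_if_acyclic: "acyclic G \<Longrightarrow> w \<notin> pa G w"
  by (auto simp: pa_def acyclic_def)

lemma acyclic_star: "v \<notin> B \<Longrightarrow> acyclic ((\<lambda>x. (x, v)) ` B)"
proof -
  assume "v \<notin> B"
  then have "trans ((\<lambda>x. (x, v)) ` B)"
    by (auto intro: transI)
  then show ?thesis
    using \<open>v \<notin> B\<close> by (auto simp: acyclic_def)
qed

lemma empty_in_DAG: "{} \<in> DAG"
  by (simp add: DAG_def acyclic_def)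

lemma eta_inj_on_DAG: "inj_on eta DAG"
proof (rule inj_onI)
  fix G H :: "('n::finite \<times> 'n) set"
  assume "G \<in> DAG" "H \<in> DAG" and eq: "eta G = eta H"
  have "pa G w = pa H w" for w
  proof (rule ccontr)
    assume ne: "pa G w \<noteq> pa H w"
    have "w \<notin> pa G w" "w \<notin> pa H w"
      using \<open>G \<in> DAG\<close> \<open>H \<in> DAG\<close> by (simp_all add: DAG_def not_mem_pa_if_acyclic)
    then obtain K where "pa K w \<noteq> {}" "w \<notin> pa K w" "K = G \<or> K = H"
      using ne by metis
    then have "(w, pa K w) \<in> Upsilon"
      by (simp add: Upsilon_def)
    then have "eta G $ (w, pa K w) \<noteq> eta H $ (w, pa K w)"
      using ne \<open>K = G \<or> K = H\<close> by (auto simp: eta_def)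
    then show False
      using eq by simp
  qed
  then show "G = H"
    unfolding pa_def by auto
qed

lemma convex_combination_01_eq:
  fixes u p q :: real
  assumes "0 < u" "u < 1" "0 \<le> p" "p \<le> 1" "0 \<le> q" "q \<le> 1"
    and "(1 - u) * p + u * q \<in> {0, 1}"
  shows "p = q"
proof -
  have nonneg: "(1 - u) * p \<ge> 0" "u * q \<ge> 0" "(1 - u) * (1 - p) \<ge> 0" "u * (1 - q) \<ge> 0"
    using assms by auto
  have "(1 - u) * (1 - p) + u * (1 - q) = 1 - ((1 - u) * p + u * q)"
    by (simp add: algebra_simps)
  with assms(7) consider "(1 - u) * p + u * q = 0" | "(1 - u) * (1 - p) + u * (1 - q) = 0"
    by auto
  then show ?thesis
  proof cases
    case 1
    then have "(1 - u) * p = 0" "u * q = 0"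
      using nonneg by linarith+
    then show ?thesis
      using assms(1,2) by simp
  next
    case 2
    then have "(1 - u) * (1 - p) = 0" "u * (1 - q) = 0"
      using nonneg by linarith+
    then show ?thesis
      using assms(1,2) by simp
  qed
qed

lemma extreme_point_of_unit_cube_subset:
  fixes x :: "real ^ 'i"
  assumes "x \<in> S" "S \<subseteq> cbox 0 1" "\<And>i. x $ i \<in> {0, 1}"
  shows "x extreme_point_of S"
  unfolding extreme_point_of_def
proof (intro conjI ballI assms(1))
  fix p q
  assume "p \<in> S" "q \<in> S"
  then have cube: "0 \<le> p $ i" "p $ i \<le> 1" "0 \<le> q $ i" "q $ i \<le> 1" for i
    using assms(2) by (auto simp: mem_box_cart)
  show "x \<notin> open_segment p q"
  proof
    assume "x \<in> open_segment p q"
    then obtain u where "p \<noteq> q" "0 < u" "u < 1" "x = (1 - u) *\<^sub>R p + u *\<^sub>R q"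
      by (auto simp: in_segment)
    moreover have "p $ i = q $ i" for i
      using convex_combination_01_eq[OF \<open>0 < u\<close> \<open>u < 1\<close> cube] assms(3)[of i] \<open>x = _\<close>
      by simp
    ultimately show False
      by (simp add: vec_eq_iff)
  qed
qed

lemma eta_in_unit_cube: "eta G \<in> cbox 0 1"
  by (simp add: mem_box_cart eta_def)

lemma convex_hull_eta_subset_unit_cube: "convex hull (eta ` S) \<subseteq> cbox 0 1"
  by (rule hull_minimal) (auto simp: eta_in_unit_cube)

lemma mem_of_eta_in_convex_hull:
  assumes "H \<in> DAG" "D \<subseteq> DAG" "eta H \<in> convex hull (eta ` D)"
  shows "H \<in> D"
proof -
  have "eta H extreme_point_of (convex hull (eta ` D))"
    by (rule extreme_point_of_unit_cube_subset[OF assms(3) convex_hull_eta_subset_unit_cube])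
      (simp add: eta_def)
  then have "eta H \<in> eta ` D"
    by (rule extreme_point_of_convex_hull)
  then show ?thesis
    using eta_inj_on_DAG assms(1,2) by (auto dest: inj_onD)
qed

lemma facet_eq_proper_face_superset:
  fixes P :: "'a::euclidean_space set"
  assumes "convex P" "is_facet F P" "T face_of P" "T \<noteq> P" "F \<subseteq> T"
  shows "F = T"
proof (rule ccontr)
  assume "F \<noteq> T"
  have "convex T"
    using assms(3) face_of_imp_convex by blast
  moreover have "F face_of T"
    using assms(2,3,5) face_of_subset face_of_imp_subset unfolding is_facet_def by blast
  ultimately have "aff_dim F < aff_dim T"
    using \<open>F \<noteq> T\<close> face_of_aff_dim_lt by blast
  moreover have "aff_dim T < aff_dim P"
    using face_of_aff_dim_lt assms(1,3,4) by blast
  ultimately show False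
    using assms(2) unfolding is_facet_def by linarith
qed

lemma face_of_coordinate_zero:
  fixes P :: "(real ^ 'i) set"
  assumes "convex P" "P \<subseteq> cbox 0 1"
  shows "(P \<inter> {x. x $ i = 0}) face_of P"
proof -
  have "P \<inter> {x. axis i (-1) \<bullet> x = 0} face_of P"
    using assms by (intro face_of_Int_supporting_hyperplane_le)
      (auto simp: inner_axis' mem_box_cart)
  then show ?thesis
    by (simp add: inner_axis')
qed

lemma convex_P_N: "convex P_N"
  by (simp add: P_N_def)

lemma eta_in_P_N: "G \<in> DAG \<Longrightarrow> eta G \<in> P_N"
  unfolding P_N_def by (rule hull_inc) simp

lemma P_N_subset_unit_cube: "P_N \<subseteq> cbox 0 1"
  unfolding P_N_def by (rule convex_hull_eta_subset_unit_cube)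

lemma facet_realises_parent_set:
  assumes "D \<subseteq> DAG" "is_facet (convex hull (eta ` D)) P_N" "{} \<notin> D"
    and "(v, B) \<in> Upsilon"
  shows "\<exists>G\<in>D. pa G v = B"
proof (rule ccontr)
  assume not_realised: "\<not> (\<exists>G\<in>D. pa G v = B)"
  define T where "T = P_N \<inter> {x. x $ (v, B) = 0}"
  have "T face_of P_N"
    unfolding T_def by (intro face_of_coordinate_zero convex_P_N P_N_subset_unit_cube)
  moreover have "T \<noteq> P_N"
  proof -
    have "v \<notin> B"
      using assms(4) by (simp add: Upsilon_def)
    then have "(\<lambda>x. (x, v)) ` B \<in> DAG"
      by (simp add: DAG_def acyclic_star)
    moreover have "eta ((\<lambda>x. (x, v)) ` B) \<notin> T"
      using assms(4) by (auto simp: T_def eta_def pa_def)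
    ultimately show ?thesis
      using eta_in_P_N by blast
  qed
  moreover have "convex hull (eta ` D) \<subseteq> T"
  proof (rule hull_minimal)
    have "eta G $ (v, B) = 0" if "G \<in> D" for G
      using not_realised that by (auto simp: eta_def)
    then show "eta ` D \<subseteq> T"
      using assms(1) eta_in_P_N by (auto simp: T_def)
    show "convex T"
      unfolding T_def by (intro convex_Int convex_P_N) (simp add: convex_def)
  qed
  ultimately have "convex hull (eta ` D) = T"
    by (rule facet_eq_proper_face_superset[OF convex_P_N assms(2)])
  moreover have "eta {} \<in> T"
  proof -
    have "eta {} $ (v, B) = 0"
      using assms(4) by (auto simp: eta_def pa_def Upsilon_def)
    then show ?thesis
      using eta_in_P_N[OF empty_in_DAG] by (simp add: T_def)
  qed
  ultimately show False
    using mem_of_eta_in_convex_hull[OF empty_in_DAG assms(1)] assms(3) by simp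
qed

lemma local_score_mono:
  assumes "D \<subseteq> DAG" and realised: "\<And>v C. (v, C) \<in> Upsilon \<Longrightarrow> \<exists>G\<in>D. pa G v = C"
    and valid: "\<And>G. G \<in> DAG \<Longrightarrow> a \<bullet> eta G \<le> b"
    and optimal: "\<And>G. G \<in> D \<Longrightarrow> a \<bullet> eta G = b"
    and "B \<subseteq> C" "v \<notin> C"
  shows "local_score a v B \<le> local_score a v C"
proof (cases "C = {}")
  case True
  then show ?thesis
    using \<open>B \<subseteq> C\<close> by simp
next
  case False
  then obtain G where G: "G \<in> D" "pa G v = C"
    using realised \<open>v \<notin> C\<close> by (auto simp: Upsilon_def)
  have "set_parents G v B \<subseteq> G"
    using G(2) \<open>B \<subseteq> C\<close> by (simp add: set_parents_subset)
  moreover have "acyclic G"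
    using assms(1) G(1) by (auto simp: DAG_def)
  ultimately have "set_parents G v B \<in> DAG"
    by (simp add: DAG_def acyclic_subset)
  then have "a \<bullet> eta (set_parents G v B) \<le> a \<bullet> eta G"
    using valid optimal G(1) by simp
  then show ?thesis
    by (simp add: inner_eta_set_parents G(2))
qed

lemma facet_closed_under_supergraphs:
  assumes "D \<subseteq> DAG" "is_facet (convex hull (eta ` D)) P_N" "{} \<notin> D"
    and "G \<in> D" "H \<in> DAG" "G \<subseteq> H"
  shows "H \<in> D"
proof -
  have "polyhedron P_N"
    unfolding P_N_def by (intro polytope_imp_polyhedron polytope_convex_hull) simp
  then have "convex hull (eta ` D) exposed_face_of P_N"
    using assms(2) exposed_face_of_polyhedron unfolding is_facet_def by blast
  then obtain a b where valid: "P_N \<subseteq> {x. a \<bullet> x \<le> b}"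
    and facet: "convex hull (eta ` D) = P_N \<inter> {x. a \<bullet> x = b}"
    unfolding exposed_face_of_def by blast
  have optimal: "a \<bullet> eta K = b" if "K \<in> D" for K
    using that facet hull_inc[of "eta K" "eta ` D"] by auto
  have "local_score a w (pa G w) \<le> local_score a w (pa H w)" for w
  proof (rule local_score_mono[OF assms(1) _ _ optimal])
    show "\<exists>K\<in>D. pa K v = C" if "(v, C) \<in> Upsilon" for v C
      using facet_realises_parent_set[OF assms(1-3) that] .
    show "a \<bullet> eta K \<le> b" if "K \<in> DAG" for K
      using valid eta_in_P_N[OF that] by auto
    show "pa G w \<subseteq> pa H w"
      using assms(6) by (auto simp: pa_def)
    show "w \<notin> pa H w"
      using assms(5) by (simp add: DAG_def not_mem_pa_if_acyclic)
  qed
  then have "a \<bullet> eta G \<le> a \<bullet> eta H"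
    unfolding inner_eta_eq_sum_local_score by (rule sum_mono)
  moreover have "a \<bullet> eta H \<le> b" "eta H \<in> P_N"
    using valid eta_in_P_N[OF assms(5)] by auto
  ultimately have "eta H \<in> convex hull (eta ` D)"
    using optimal[OF assms(4)] facet by simp
  then show ?thesis
    using mem_of_eta_in_convex_hull assms(1,5) by blast
qed

theorem corollary2:
  fixes D :: "('n::finite \<times> 'n) set set"
  assumes "CARD('n) \<ge> 2"
    and "D \<subseteq> DAG"
    and "is_facet (convex hull (eta ` D)) (P_N :: (real ^ ('n \<times> 'n set)) set)"
    and "{} \<notin> D"
  shows "(\<forall>G\<in>D. \<forall>H\<in>DAG. G \<subseteq> H \<longrightarrow> H \<in> D)
    \<and> (\<forall>(a, B)\<in>(Upsilon :: ('n \<times> 'n set) set). \<exists>G\<in>D. pa G a = B)"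
proof (intro conjI ballI impI)
  show "H \<in> D" if "G \<in> D" "H \<in> DAG" "G \<subseteq> H" for G H
    using facet_closed_under_supergraphs[OF assms(2-4) that] .
  show "case aB of (a, B) \<Rightarrow> \<exists>G\<in>D. pa G a = B" if "aB \<in> Upsilon" for aB
    using facet_realises_parent_set[OF assms(2-4)] that by (cases aB) simp
qed

end
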